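(* Let $I\subseteq[0,\infty)$ be an interval, let $f:I\to\mathbb{R}$ be twice differentiable on $I^\circ$, and let $a,b\in I^\circ$ with $a<b$ such that $f''\in L^1[a,b]$. Let $q>1$ and $p=\frac{q}{q-1}$. If $|f''|^q$ is quasi-convex on $[a,b]$, then $$\left|\frac{f(a)+f(b)}{2}-\frac{1}{b-a}\int_a^b f(x)\,dx\right|\le \frac{(b-a)^2}{2^{1+\frac1q}}\bigl(\beta(2,p+1)\bigr)^{\frac1p}\left(\max\{|f''(a)|^q,|f''(b)|^q\}\right)^{\frac1q}.$$
   Context: A function $g:[a,b]\to\mathbb{R}$ is quasi-convex on $[a,b]$ if $g(\lambda x+(1-\lambda)y)\le\max\{g(x),g(y)\}$ for all $x,y\in[a,b]$ and $\lambda\in[0,1]$. $\beta(x,y)=\int_0^1 t^{x-1}(1-t)^{y-1}\,dt$ for $x,y>0$. *)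

theory Defs
  imports "HOL-Analysis.Analysis"
begin

definition quasiconvex_on :: "real set \<Rightarrow> (real \<Rightarrow> real) \<Rightarrow> bool" where
  "quasiconvex_on S g \<longleftrightarrow>
     (\<forall>x\<in>S. \<forall>y\<in>S. \<forall>t::real. 0 \<le> t \<and> t \<le> 1 \<longrightarrow>
        g (t * x + (1 - t) * y) \<le> max (g x) (g y))"

definition beta_fn :: "real \<Rightarrow> real \<Rightarrow> real" where
  "beta_fn x y = integral {0..1} (\<lambda>t. t powr (x - 1) * (1 - t) powr (y - 1))"

end

theory Submission
  imports Defs
begin

(*
  Instead of the paper's Hoelder-inequality argument we prove the sharper classical
  estimate and then compare constants.  Write  E(f) = (b-a)(f a + f b)/2 - int_a^b f
  for the error of the trapezoid rule.

  1. Quasi-convexity of |f''|^q bounds |f''| on [a,b] by K = max |f''(a)| |f''(b)|.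
  2. For convex g the right Hermite-Hadamard inequality gives E(g) >= 0 (g lies below
     its chord).  Since E is linear and E(x^2) = (b-a)^3/6, applying this to the convex
     functions K x^2/2 +- f yields the classical bound |E(f)| <= K (b-a)^3/12.
  3. Evaluating beta(2, p+1) = 1/((p+1)(p+2)) through the Gamma function and using
     (p+1)(p+2) <= 2 * 3^p, the paper's constant beta(2,p+1)^(1/p) / 2^(1+1/q) is at
     least 1/12.
  The theorem follows by dividing step 2 by b - a and weakening 1/12 by step 3.
*)

lemma quasiconvex_on_Icc_le_max:
  fixes g :: "real \<Rightarrow> real"
  assumes "quasiconvex_on {a..b} g" and x: "x \<in> {a..b}"
  shows "g x \<le> max (g a) (g b)"
proof (cases "a = b")
  case True
  with x show ?thesis by simp
next
  case False
  with x have ab: "a < b" by auto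
  define t where "t = (b - x) / (b - a)"
  have t: "0 \<le> t" "t \<le> 1" using x ab by (auto simp: t_def field_simps)
  have "t * (b - a) = b - x" using ab by (simp add: t_def)
  then have "x = t * a + (1 - t) * b" by (simp add: algebra_simps)
  then show ?thesis
    using assms(1) t ab unfolding quasiconvex_on_def by (metis atLeastAtMost_iff order_less_imp_le order_refl)
qed

lemma max_powr:
  fixes u v q :: real
  assumes "0 \<le> u" and "0 \<le> v" and "0 \<le> q"
  shows "max (u powr q) (v powr q) = max u v powr q"
proof (cases "u \<le> v")
  case True
  then show ?thesis using assms by (simp add: max_absorb2 powr_mono2)
next
  case False
  then show ?thesis using assms by (simp add: max_absorb1 powr_mono2)
qed

lemma abs_le_max_of_quasiconvex_powr:
  fixes h :: "real \<Rightarrow> real"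
  assumes q: "q > 0" and qc: "quasiconvex_on {a..b} (\<lambda>x. \<bar>h x\<bar> powr q)" and x: "x \<in> {a..b}"
  shows "\<bar>h x\<bar> \<le> max \<bar>h a\<bar> \<bar>h b\<bar>"
proof -
  have "\<bar>h x\<bar> powr q \<le> max (\<bar>h a\<bar> powr q) (\<bar>h b\<bar> powr q)"
    using quasiconvex_on_Icc_le_max[OF qc x] .
  also have "\<dots> = (max \<bar>h a\<bar> \<bar>h b\<bar>) powr q"
    using q by (simp add: max_powr)
  finally show ?thesis
    using q by (meson abs_ge_zero max.coboundedI1 not_le powr_less_mono2)
qed

definition trapezoid_error :: "(real \<Rightarrow> real) \<Rightarrow> real \<Rightarrow> real \<Rightarrow> real" where
  "trapezoid_error f a b = (b - a) * (f a + f b) / 2 - integral {a..b} f"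

(* Right Hermite-Hadamard inequality: a convex function lies below its chord, so the
   trapezoid rule overestimates its integral. *)
lemma trapezoid_error_convex_nonneg:
  fixes g :: "real \<Rightarrow> real"
  assumes cv: "convex_on {a..b} g" and ab: "a \<le> b" and int: "g integrable_on {a..b}"
  shows "0 \<le> trapezoid_error g a b"
proof -
  define s where "s = (g b - g a) / (b - a)"
  define F where "F x = g a * x + s / 2 * (x - a)^2" for x
  have chord: "((\<lambda>x. s * (x - a) + g a) has_integral (F b - F a)) {a..b}"
  proof (rule fundamental_theorem_of_calculus[OF ab])
    fix x assume "x \<in> {a..b}"
    have "(F has_real_derivative s * (x - a) + g a) (at x within {a..b})"
      unfolding F_def by (auto intro!: derivative_eq_intros simp: power2_eq_square algebra_simps)
    then show "(F has_vector_derivative s * (x - a) + g a) (at x within {a..b})"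
      by (simp add: has_real_derivative_iff_has_vector_derivative)
  qed
  have "integral {a..b} g \<le> F b - F a"
    using has_integral_le[OF integrable_integral[OF int] chord] convex_onD_Icc'[OF cv]
    by (simp add: s_def)
  also have "F b - F a = (b - a) * (g a + g b) / 2"
  proof (cases "a = b")
    case False
    then show ?thesis by (simp add: F_def s_def field_simps power2_eq_square)
  qed (simp add: F_def)
  finally show ?thesis by (simp add: trapezoid_error_def)
qed

lemma trapezoid_error_add_scaled:
  assumes "f integrable_on {a..b}" and "g integrable_on {a..b}"
  shows "trapezoid_error (\<lambda>x. f x + c * g x) a b = trapezoid_error f a b + c * trapezoid_error g a b"
proof -
  have "integral {a..b} (\<lambda>x. f x + c * g x) = integral {a..b} f + c * integral {a..b} g"
    using integral_add[OF assms(1) integrable_on_cmult_left[OF assms(2), of c]] by simp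
  then show ?thesis by (simp add: trapezoid_error_def field_simps)
qed

lemma trapezoid_error_neg: "trapezoid_error (\<lambda>x. - f x) a b = - trapezoid_error f a b"
  by (simp add: trapezoid_error_def integral_neg field_simps)

(* The trapezoid error of x^2, which is exactly the defect compensated by K x^2/2. *)
lemma trapezoid_error_square:
  fixes a b :: real assumes ab: "a \<le> b"
  shows "trapezoid_error (\<lambda>x. x^2) a b = (b - a)^3 / 6"
proof -
  have "((\<lambda>x. x^2) has_integral (b^3 / 3 - a^3 / 3)) {a..b}"
  proof (rule fundamental_theorem_of_calculus[OF ab])
    fix x :: real
    have "((\<lambda>x. x^3 / 3) has_real_derivative x^2) (at x within {a..b})"
      by (auto intro!: derivative_eq_intros simp: power2_eq_square)
    then show "((\<lambda>x. x^3 / 3) has_vector_derivative x^2) (at x within {a..b})"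
      by (simp add: has_real_derivative_iff_has_vector_derivative)
  qed
  then show ?thesis
    by (simp add: trapezoid_error_def integral_unique power2_eq_square power3_eq_cube field_simps)
qed

(* One-sided bound: if f'' >= -K then f + K x^2/2 is convex, so E(f) >= -K (b-a)^3/12. *)
lemma trapezoid_error_lower_bound:
  fixes f f' f'' :: "real \<Rightarrow> real"
  assumes ab: "a \<le> b"
    and f': "\<And>x. x \<in> {a..b} \<Longrightarrow> (f has_real_derivative f' x) (at x)"
    and f'': "\<And>x. x \<in> {a..b} \<Longrightarrow> (f' has_real_derivative f'' x) (at x)"
    and lower: "\<And>x. x \<in> {a..b} \<Longrightarrow> - K \<le> f'' x"
  shows "- (K * (b - a)^3 / 12) \<le> trapezoid_error f a b"
proof -
  have cont: "continuous_on {a..b} f"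
    using f' by (meson DERIV_isCont continuous_at_imp_continuous_on)
  have "convex_on {a..b} (\<lambda>x. f x + K / 2 * x^2)"
  proof (rule f''_ge0_imp_convex)
    fix x assume x: "x \<in> {a..b}"
    show "((\<lambda>x. f x + K / 2 * x^2) has_real_derivative f' x + K * x) (at x)"
      using f'[OF x] by (auto intro!: derivative_eq_intros simp: power2_eq_square)
    show "((\<lambda>x. f' x + K * x) has_real_derivative f'' x + K) (at x)"
      using f''[OF x] by (auto intro!: derivative_eq_intros)
    show "0 \<le> f'' x + K" using lower[OF x] by linarith
  qed simp
  then have "0 \<le> trapezoid_error (\<lambda>x. f x + K / 2 * x^2) a b"
    by (rule trapezoid_error_convex_nonneg[OF _ ab])
      (intro integrable_continuous_interval continuous_intros cont)
  moreover have "trapezoid_error (\<lambda>x. f x + K / 2 * x^2) a b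
      = trapezoid_error f a b + K / 2 * trapezoid_error (\<lambda>x. x^2) a b"
    by (rule trapezoid_error_add_scaled) (intro integrable_continuous_interval continuous_intros cont)+
  moreover have "K / 2 * trapezoid_error (\<lambda>x. x^2) a b = K * (b - a)^3 / 12"
    using ab by (simp add: trapezoid_error_square)
  ultimately show ?thesis by linarith
qed

lemma trapezoid_error_bound:
  fixes f f' f'' :: "real \<Rightarrow> real"
  assumes ab: "a \<le> b"
    and f': "\<And>x. x \<in> {a..b} \<Longrightarrow> (f has_real_derivative f' x) (at x)"
    and f'': "\<And>x. x \<in> {a..b} \<Longrightarrow> (f' has_real_derivative f'' x) (at x)"
    and bound: "\<And>x. x \<in> {a..b} \<Longrightarrow> \<bar>f'' x\<bar> \<le> K"
  shows "\<bar>trapezoid_error f a b\<bar> \<le> K * (b - a)^3 / 12"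
proof -
  have "- (K * (b - a)^3 / 12) \<le> trapezoid_error f a b"
  proof (rule trapezoid_error_lower_bound[OF ab f' f''])
    show "- K \<le> f'' x" if "x \<in> {a..b}" for x using bound[OF that] by linarith
  qed
  moreover have "- (K * (b - a)^3 / 12) \<le> trapezoid_error (\<lambda>x. - f x) a b"
  proof (rule trapezoid_error_lower_bound[OF ab])
    fix x assume x: "x \<in> {a..b}"
    show "((\<lambda>x. - f x) has_real_derivative - f' x) (at x)" using f'[OF x] by (rule DERIV_minus)
    show "((\<lambda>x. - f' x) has_real_derivative - f'' x) (at x)" using f''[OF x] by (rule DERIV_minus)
    show "- K \<le> - f'' x" using bound[OF x] by linarith
  qed
  ultimately show ?thesis
    by (simp add: trapezoid_error_neg)
qed

lemma beta_fn_eq_Beta: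
  assumes "x > 0" and "y > 0"
  shows "beta_fn x y = Beta x y"
  unfolding beta_fn_def using has_integral_Beta_real[OF assms] by (rule integral_unique)

(* beta(2, y) = 1/(y(y+1)), from Gamma(y+2) = (y+1) y Gamma(y). *)
lemma Beta_two:
  fixes y :: real assumes y: "y > 0"
  shows "Beta 2 y = 1 / (y * (y + 1))"
proof -
  have nonint: "z \<notin> \<int>\<^sub>\<le>\<^sub>0" if "z > 0" for z :: real
    using that nonpos_Ints_nonpos by fastforce
  have "Gamma (2 :: real) = 1"
    using Gamma_plus1[OF nonint[of 1]] by simp
  moreover have "Gamma (2 + y) = (y + 1) * y * Gamma y"
    using Gamma_plus1[OF nonint[of "y + 1"]] Gamma_plus1[OF nonint[of y]] y
    by (simp add: add.commute add.left_commute)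
  moreover have "Gamma y \<noteq> 0"
    using Gamma_eq_zero_iff nonint y by blast
  ultimately show ?thesis
    by (simp add: Beta_def mult.commute)
qed

(* Elementary growth estimate, via 3^s >= e^s >= (1 + s/2)^2 for s = p - 1 >= 0. *)
lemma powr_three_lower_bound:
  fixes p :: real assumes p: "p \<ge> 1"
  shows "(p + 1) * (p + 2) \<le> 2 * 3 powr p"
proof -
  define s where "s = p - 1"
  have s: "0 \<le> s" using p by (simp add: s_def)
  have "(1 + s / 2)^2 \<le> exp (s / 2)^2"
    using s by (intro power_mono exp_ge_add_one_self) auto
  also have "\<dots> = exp s"
    by (simp add: power2_eq_square exp_add[symmetric])
  also have "\<dots> \<le> 3 powr s"
    using s ln3_gt_1 by (simp add: powr_def mult_left_mono[of 1 "ln 3" s, simplified])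
  finally have "(1 + s / 2)^2 \<le> 3 powr s" .
  moreover have "6 * (1 + s / 2)^2 - (p + 1) * (p + 2) = s^2 / 2 + s"
    by (simp add: s_def power2_eq_square field_simps)
  moreover have "3 powr p = 3 * 3 powr s"
    by (simp add: s_def powr_diff)
  moreover have "0 \<le> s^2 / 2 + s" using s by simp
  ultimately show ?thesis by linarith
qed

(* Step 3: the constant of the theorem dominates the classical constant 1/12.
   With 2^(1+1/q) = 4 / 2^(1/p) this reduces to (2 beta(2,p+1))^(1/p) >= 1/3. *)
lemma trapezoid_constant_lower_bound:
  fixes p q :: real
  assumes q: "q > 1" and p_def: "p = q / (q - 1)"
  shows "1 / 12 \<le> beta_fn 2 (p + 1) powr (1 / p) / 2 powr (1 + 1 / q)"
proof -
  have p: "p > 1" unfolding p_def using q by (subst less_divide_eq_1_pos) auto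
  have conjugate: "1 / q = 1 - 1 / p" unfolding p_def using q by (simp add: diff_divide_distrib)
  define B where "B = beta_fn 2 (p + 1)"
  have B: "B = 1 / ((p + 1) * (p + 2))"
    using p by (simp add: B_def beta_fn_eq_Beta Beta_two add.commute add.left_commute)
  have "3 powr (- p) \<le> 2 * B"
  proof -
    have "0 < (p + 1) * (p + 2)" using p by simp
    then show ?thesis
      using powr_three_lower_bound[of p] p by (simp add: B powr_minus divide_simps)
  qed
  then have "(3 powr (- p)) powr (1 / p) \<le> (2 * B) powr (1 / p)"
    using p by (intro powr_mono2) auto
  moreover have "(3 powr (- p)) powr (1 / p) = 1 / 3"
  proof -
    have "- p * (1 / p) = -1" using p by simp
    then show ?thesis by (simp only: powr_powr) (simp add: powr_minus)
  qed
  moreover have "B powr (1 / p) / 2 powr (1 + 1 / q) = (2 * B) powr (1 / p) / 4"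
  proof -
    have "0 < B" using p by (simp add: B)
    then show ?thesis unfolding conjugate by (simp add: powr_mult powr_add powr_diff)
  qed
  ultimately show ?thesis
    unfolding B_def[symmetric] by linarith
qed

theorem theorem2p3:
  fixes I :: "real set" and f f' f'' :: "real \<Rightarrow> real" and a b p q :: real
  assumes "is_interval I" and "I \<subseteq> {0..}"
    and "\<And>x. x \<in> interior I \<Longrightarrow> (f has_real_derivative f' x) (at x)"
    and "\<And>x. x \<in> interior I \<Longrightarrow> (f' has_real_derivative f'' x) (at x)"
    and "a \<in> interior I" and "b \<in> interior I" and "a < b"
    and "f'' absolutely_integrable_on {a..b}"
    and "q > 1" and "p = q / (q - 1)"
    and "quasiconvex_on {a..b} (\<lambda>x. \<bar>f'' x\<bar> powr q)"
  shows "\<bar>(f a + f b) / 2 - (1 / (b - a)) * integral {a..b} f\<bar>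
    \<le> (b - a)^2 / 2 powr (1 + 1 / q) * (beta_fn 2 (p + 1)) powr (1 / p)
       * (max (\<bar>f'' a\<bar> powr q) (\<bar>f'' b\<bar> powr q)) powr (1 / q)"
proof -
  have "{a..b} \<subseteq> interior I"
    using assms(1,5,6,7) closed_segment_subset[of a "interior I" b]
    by (simp add: is_interval_convex convex_interior closed_segment_eq_real_ivl)
  define K where "K = max \<bar>f'' a\<bar> \<bar>f'' b\<bar>"
  have "\<bar>trapezoid_error f a b\<bar> \<le> K * (b - a)^3 / 12"
  proof (rule trapezoid_error_bound[where f' = f'])
    show "\<bar>f'' x\<bar> \<le> K" if "x \<in> {a..b}" for x
      unfolding K_def using assms(9,11) that by (intro abs_le_max_of_quasiconvex_powr) auto
  qed (use assms(3,4,7) \<open>{a..b} \<subseteq> interior I\<close> in auto)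
  then have "\<bar>(f a + f b) / 2 - (1 / (b - a)) * integral {a..b} f\<bar> \<le> (b - a)^2 * K * (1 / 12)"
    using assms(7) by (simp add: trapezoid_error_def abs_div field_simps power2_eq_square power3_eq_cube)
  also have "\<dots> \<le> (b - a)^2 * K * (beta_fn 2 (p + 1) powr (1 / p) / 2 powr (1 + 1 / q))"
    using trapezoid_constant_lower_bound[OF assms(9,10)] by (intro mult_left_mono) (auto simp: K_def)
  also have "K = (max (\<bar>f'' a\<bar> powr q) (\<bar>f'' b\<bar> powr q)) powr (1 / q)"
    using assms(9) by (simp add: K_def max_powr powr_powr)
  finally show ?thesis by (simp add: ac_simps)
qed

end
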